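(* For every $n\ge2$, $$\sum_{k=1}^{n-1}k^2\,d_{k,n}=(4n-1)(2n-3)!!-3(2n-2)!!.$$
   Context: $\mathcal{T}_n$ is the set of fully resolved (binary) rooted trees with leaves bijectively labeled by $\{1,\dots,n\}$, and $d_{k,n}=|\{T\in\mathcal{T}_n:\delta_T(1)=k\}|$, where $\delta_T(1)$ is the depth (number of arcs from the root) of leaf $1$ in $T$. Double factorials: $(2m-1)!!=(2m-1)(2m-3)\cdots1$, $(2m)!!=(2m)(2m-2)\cdots2$, $0!!=1$. *)

theory Defs
  imports Main
begin

text \<open>Children of an internal node are
  unordered; we represent each unordered tree by its canonical ordered form, in which
  the left subtree contains the smallest leaf label of the node.\<close>

datatype btree = Leaf nat | Node btree btree

fun leaves :: "btree \<Rightarrow> nat set" where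
  "leaves (Leaf i) = {i}"
| "leaves (Node l r) = leaves l \<union> leaves r"

fun wf_tree :: "btree \<Rightarrow> bool" where
  "wf_tree (Leaf i) = True"
| "wf_tree (Node l r) = (wf_tree l \<and> wf_tree r \<and> leaves l \<inter> leaves r = {}
      \<and> Min (leaves l) < Min (leaves r))"

definition trees :: "nat \<Rightarrow> btree set" where
  "trees n = {t. wf_tree t \<and> leaves t = {1..n}}"

fun depth :: "nat \<Rightarrow> btree \<Rightarrow> nat" where
  "depth i (Leaf j) = 0"
| "depth i (Node l r) = Suc (if i \<in> leaves l then depth i l else depth i r)"

definition d :: "nat \<Rightarrow> nat \<Rightarrow> nat" where
  "d k n = card {t \<in> trees n. depth 1 t = k}"

fun dfact :: "nat \<Rightarrow> nat" where
  "dfact 0 = 1"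
| "dfact (Suc 0) = 1"
| "dfact (Suc (Suc m)) = (Suc (Suc m)) * dfact m"

end

theory Submission
  imports Defs
begin

text \<open>Every tree on leaves \<open>{1..n+1}\<close> arises in exactly one way by grafting the leaf \<open>n+1\<close>
  onto one of the \<open>2n-1\<close> edges of a tree on \<open>{1..n}\<close>, counting a new edge above the root.
  If leaf 1 has depth \<open>k\<close>, grafting onto one of the \<open>k+1\<close> edges on (or above) its root path
  increases its depth to \<open>k+1\<close>, and the other \<open>2n-2-k\<close> grafts leave it at \<open>k\<close>. Hence the
  moments \<open>M\<^sub>p(n) = \<Sum>\<^sub>T \<delta>\<^sub>T(1)\<^sup>p\<close> satisfy linear recurrences in \<open>n\<close>, solved by
  \<open>M\<^sub>0(n) = (2n-3)!!\<close>, \<open>M\<^sub>1(n) = (2n-2)!! - (2n-3)!!\<close> and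
  \<open>M\<^sub>2(n) = (4n-1)(2n-3)!! - 3(2n-2)!!\<close>.\<close>

text \<open>Grafting keeps trees canonical because \<open>x\<close> is only grafted into trees whose leaves are all
  smaller than \<open>x\<close>, so \<open>x\<close> never becomes the minimum of a left subtree.\<close>

fun grafts :: "nat \<Rightarrow> btree \<Rightarrow> btree list" where
  "grafts x (Leaf j) = [Node (Leaf j) (Leaf x)]"
| "grafts x (Node l r) = Node (Node l r) (Leaf x)
     # map (\<lambda>l'. Node l' r) (grafts x l) @ map (\<lambda>r'. Node l r') (grafts x r)"

fun prune :: "nat \<Rightarrow> btree \<Rightarrow> btree" where
  "prune x (Leaf j) = Leaf j"
| "prune x (Node l r) = (if l = Leaf x then r else if r = Leaf x then l
     else if x \<in> leaves l then Node (prune x l) r else Node l (prune x r))"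

fun leaf_count :: "btree \<Rightarrow> nat" where
  "leaf_count (Leaf j) = 1"
| "leaf_count (Node l r) = leaf_count l + leaf_count r"

lemma finite_leaves[simp]: "finite (leaves t)"
  by (induction t) auto

lemma leaves_nonempty[simp]: "leaves t \<noteq> {}"
  by (induction t) auto

lemma leaf_count_pos: "leaf_count t \<ge> 1"
  by (induction t) auto

lemma card_leaves_eq_leaf_count: "wf_tree t \<Longrightarrow> card (leaves t) = leaf_count t"
  by (induction t) (auto simp: card_Un_disjoint)

lemma wf_tree_leaves_singleton: "wf_tree t \<Longrightarrow> leaves t = {a} \<Longrightarrow> t = Leaf a"
proof (induction t)
  case (Leaf x)
  then show ?case by simp
next
  case (Node l r)
  have "leaves l \<subseteq> {a}" "leaves r \<subseteq> {a}" using Node.prems by auto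
  then have "leaves l = {a}" "leaves r = {a}" using leaves_nonempty
    by (metis subset_singletonD)+
  then show ?case using Node.prems by auto
qed

lemma leaves_grafts: "t' \<in> set (grafts x t) \<Longrightarrow> leaves t' = insert x (leaves t)"
  by (induction t arbitrary: t') auto

lemma Min_insert_greater:
  "finite A \<Longrightarrow> A \<noteq> {} \<Longrightarrow> \<forall>y\<in>A. y < x \<Longrightarrow> Min (insert x A) = Min A"
  by (simp add: Min_insert min_def) (meson Min_in less_le_not_le)

lemma grafts_Node_cases:
  assumes "t' \<in> set (grafts x (Node l r))"
  obtains "t' = Node (Node l r) (Leaf x)"
    | l' where "l' \<in> set (grafts x l)" "t' = Node l' r"
    | r' where "r' \<in> set (grafts x r)" "t' = Node l r'"
  using assms by auto

lemma wf_grafts: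
  assumes "wf_tree t" "\<forall>y\<in>leaves t. y < x" "t' \<in> set (grafts x t)"
  shows "wf_tree t'"
  using assms
proof (induction t arbitrary: t')
  case (Leaf j)
  then show ?case by auto
next
  case (Node l r)
  have "Min (leaves (Node l r)) < x"
    using Node.prems(2) Min_in[of "leaves (Node l r)"] by simp
  from Node.prems(3) show ?case
  proof (cases rule: grafts_Node_cases)
    case 1
    then show ?thesis using Node.prems \<open>Min (leaves (Node l r)) < x\<close> by auto
  next
    case (2 l')
    then show ?thesis using Node.prems Node.IH(1)[of l'] leaves_grafts[of l' x l]
      Min_insert_greater[of "leaves l" x] by auto
  next
    case (3 r')
    then show ?thesis using Node.prems Node.IH(2)[of r'] leaves_grafts[of r' x r]
      Min_insert_greater[of "leaves r" x] by auto
  qed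
qed

lemma prune_grafts:
  assumes "x \<notin> leaves t" "t' \<in> set (grafts x t)"
  shows "prune x t' = t"
  using assms
proof (induction t arbitrary: t')
  case (Leaf j)
  then show ?case by auto
next
  case (Node l r)
  from Node.prems(2) show ?case
  proof (cases rule: grafts_Node_cases)
    case 1
    then show ?thesis using Node.prems by auto
  next
    case (2 l')
    have "leaves l' = insert x (leaves l)" using leaves_grafts[OF 2(1)] .
    then have "l' \<noteq> Leaf x" "x \<in> leaves l'"
      using leaves_nonempty[of l] Node.prems(1) by (auto simp: subset_singleton_iff)
    then show ?thesis using Node.IH(1)[OF _ 2(1)] Node.prems(1) 2(2) by auto
  next
    case (3 r')
    have "leaves r' = insert x (leaves r)" using leaves_grafts[OF 3(1)] .
    then have "r' \<noteq> Leaf x"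
      using leaves_nonempty[of r] Node.prems(1) by (auto simp: subset_singleton_iff)
    then show ?thesis using Node.IH(2)[OF _ 3(1)] Node.prems(1) 3(2) by auto
  qed
qed

lemma distinct_grafts: "x \<notin> leaves t \<Longrightarrow> distinct (grafts x t)"
proof (induction t)
  case (Leaf j)
  then show ?case by auto
next
  case (Node l r)
  have "l \<notin> set (grafts x l)" using leaves_grafts[of l x l] Node.prems by auto
  then show ?case using Node by (auto simp: distinct_map inj_on_def)
qed

lemma prune_max_leaf:
  assumes "wf_tree t" "x \<in> leaves t" "leaves t \<noteq> {x}" "\<forall>y\<in>leaves t. y \<le> x"
  shows "wf_tree (prune x t) \<and> leaves (prune x t) = leaves t - {x}
    \<and> t \<in> set (grafts x (prune x t))"
  using assms
proof (induction t)
  case (Leaf j)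
  then show ?case by auto
next
  case (Node l r)
  have wl: "wf_tree l" "wf_tree r" "leaves l \<inter> leaves r = {}" "Min (leaves l) < Min (leaves r)"
    using Node.prems(1) by auto
  have mr: "Min (leaves r) \<le> x" using Node.prems(4) Min_in[of "leaves r"] by auto
  have l_ne: "l \<noteq> Leaf x"
  proof
    assume "l = Leaf x" then have "x < Min (leaves r)" using wl(4) by simp
    with mr show False by simp
  qed
  show ?case
  proof (cases "r = Leaf x")
    case True
    then show ?thesis using l_ne wl by (cases l) auto
  next
    case rx: False
    show ?thesis
    proof (cases "x \<in> leaves l")
      case True
      have "leaves l \<noteq> {x}" using wf_tree_leaves_singleton[OF wl(1)] l_ne by auto
      then have IH: "wf_tree (prune x l) \<and> leaves (prune x l) = leaves l - {x}
          \<and> l \<in> set (grafts x (prune x l))"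
        using Node.IH(1) wl True Node.prems(4) by auto
      have "Min (leaves l) \<noteq> x" using wl(4) mr by linarith
      then have "Min (leaves l) \<in> leaves l - {x}" using Min_in[of "leaves l"] by auto
      then have "Min (leaves l - {x}) = Min (leaves l)"
        by (metis Diff_subset Min_antimono Min_le antisym empty_iff finite_Diff finite_leaves)
      then show ?thesis using IH wl True l_ne rx by auto
    next
      case False
      then have xr: "x \<in> leaves r" using Node.prems(2) by auto
      have "leaves r \<noteq> {x}" using wf_tree_leaves_singleton[OF wl(2)] rx by auto
      then have IH: "wf_tree (prune x r) \<and> leaves (prune x r) = leaves r - {x}
          \<and> r \<in> set (grafts x (prune x r))"
        using Node.IH(2) wl xr Node.prems(4) by auto
      have ne: "leaves r - {x} \<noteq> {}" using \<open>leaves r \<noteq> {x}\<close> xr by auto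
      have "Min (leaves r - {x}) \<in> leaves r" using Min_in[OF _ ne] by auto
      then have "Min (leaves r) \<le> Min (leaves r - {x})" by simp
      then have "Min (leaves l) < Min (leaves r - {x})" using wl(4) by linarith
      then show ?thesis using IH wl False l_ne rx by auto
    qed
  qed
qed

lemma depth_less_leaf_count: "i \<in> leaves t \<Longrightarrow> depth i t < leaf_count t"
proof (induction t)
  case (Leaf j) then show ?case by simp
next
  case (Node l r) then show ?case using leaf_count_pos[of l] leaf_count_pos[of r] by auto
qed

lemma length_grafts: "length (grafts x t) = 2 * leaf_count t - 1"
proof (induction t)
  case (Node l r)
  have "leaf_count l \<ge> 1" "leaf_count r \<ge> 1" by (rule leaf_count_pos)+
  then show ?case using Node by simp
qed simp

lemma sum_list_map_grafts_const:
  "(\<Sum>t'\<leftarrow>grafts x t. c) = (2 * int (leaf_count t) - 1) * c"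
  using leaf_count_pos[of t] by (simp add: sum_list_triv length_grafts of_nat_diff)

lemma sum_list_grafts_depth:
  assumes "i \<in> leaves t" "i \<noteq> x"
  shows "(\<Sum>t'\<leftarrow>grafts x t. f (depth i t')) =
    int (depth i t + 1) * f (depth i t + 1)
    + (2 * int (leaf_count t) - 2 - int (depth i t)) * f (depth i t)"
  using assms
proof (induction t arbitrary: f)
  case (Leaf j)
  then show ?case by simp
next
  case (Node l r)
  show ?case
  proof (cases "i \<in> leaves l")
    case True
    have "(\<Sum>t'\<leftarrow>grafts x l. f (depth i (Node t' r)))
        = (\<Sum>t'\<leftarrow>grafts x l. (f \<circ> Suc) (depth i t'))"
      using True by (intro arg_cong[where f = sum_list] map_cong) (auto simp: leaves_grafts)
    then show ?thesis
      using True Node.IH(1)[of "f \<circ> Suc"] Node.prems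
      by (simp add: sum_list_map_grafts_const o_def algebra_simps)
  next
    case False
    then have "i \<in> leaves r" using Node.prems by simp
    have "(\<Sum>t'\<leftarrow>grafts x l. f (depth i (Node t' r)))
        = (\<Sum>t'\<leftarrow>grafts x l. f (Suc (depth i r)))"
      using False Node.prems
      by (intro arg_cong[where f = sum_list] map_cong) (auto simp: leaves_grafts)
    then show ?thesis
      using False \<open>i \<in> leaves r\<close> Node.IH(2)[of "f \<circ> Suc"] Node.prems
      by (simp add: sum_list_map_grafts_const o_def algebra_simps)
  qed
qed

lemma leaf_count_trees: "t \<in> trees n \<Longrightarrow> leaf_count t = n"
  using card_leaves_eq_leaf_count[of t] by (simp add: trees_def)

lemma trees_1: "trees 1 = {Leaf 1}"
  using wf_tree_leaves_singleton by (auto simp: trees_def)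

lemma trees_Suc:
  assumes "n \<ge> 1"
  shows "trees (Suc n) = (\<Union>t\<in>trees n. set (grafts (Suc n) t))"
proof
  show "trees (Suc n) \<subseteq> (\<Union>t\<in>trees n. set (grafts (Suc n) t))"
  proof
    fix t' assume "t' \<in> trees (Suc n)"
    then have t': "wf_tree t'" "leaves t' = {1..Suc n}" by (auto simp: trees_def)
    then have "leaves t' \<noteq> {Suc n}" using assms by auto
    then have pruned: "wf_tree (prune (Suc n) t')" "leaves (prune (Suc n) t') = {1..n}"
      "t' \<in> set (grafts (Suc n) (prune (Suc n) t'))"
      using prune_max_leaf[OF t'(1)] t'(2) by auto
    then have "prune (Suc n) t' \<in> trees n" by (simp add: trees_def)
    with pruned(3) show "t' \<in> (\<Union>t\<in>trees n. set (grafts (Suc n) t))" by blast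
  qed
next
  show "(\<Union>t\<in>trees n. set (grafts (Suc n) t)) \<subseteq> trees (Suc n)"
  proof safe
    fix t t' assume "t \<in> trees n" "t' \<in> set (grafts (Suc n) t)"
    moreover have "insert (Suc n) {1..n} = {1..Suc n}" by auto
    ultimately show "t' \<in> trees (Suc n)"
      using wf_grafts[of t "Suc n" t'] leaves_grafts[of t' "Suc n" t] by (auto simp: trees_def)
  qed
qed

lemma finite_trees: "finite (trees n)"
proof (cases "n = 0")
  case True
  have "trees 0 = {}" by (auto simp: trees_def)
  then show ?thesis using True by simp
next
  case False
  then have "n \<ge> 1" by simp
  then show ?thesis
    by (induction n rule: nat_induct_at_least) (simp_all add: trees_1[simplified] trees_Suc)
qed

lemma sum_trees_Suc:
  assumes "n \<ge> 1"
  shows "(\<Sum>t'\<in>trees (Suc n). f (depth 1 t')) =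
    (\<Sum>t\<in>trees n. int (depth 1 t + 1) * f (depth 1 t + 1)
                  + (2 * int n - 2 - int (depth 1 t)) * f (depth 1 t))"
proof -
  have "set (grafts (Suc n) t1) \<inter> set (grafts (Suc n) t2) = {}"
    if "t1 \<in> trees n" "t2 \<in> trees n" "t1 \<noteq> t2" for t1 t2
    using that prune_grafts[of "Suc n" t1] prune_grafts[of "Suc n" t2]
    by (auto simp: trees_def)
  then have "(\<Sum>t'\<in>trees (Suc n). f (depth 1 t')) =
      (\<Sum>t\<in>trees n. \<Sum>t'\<in>set (grafts (Suc n) t). f (depth 1 t'))"
    unfolding trees_Suc[OF assms] by (intro sum.UNION_disjoint finite_trees) auto
  also have "\<dots> = (\<Sum>t\<in>trees n. int (depth 1 t + 1) * f (depth 1 t + 1)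
                  + (2 * int n - 2 - int (depth 1 t)) * f (depth 1 t))"
  proof (rule sum.cong[OF refl])
    fix t assume t: "t \<in> trees n"
    then have "Suc n \<notin> leaves t" "1 \<in> leaves t" using assms by (auto simp: trees_def)
    then show "(\<Sum>t'\<in>set (grafts (Suc n) t). f (depth 1 t')) =
        int (depth 1 t + 1) * f (depth 1 t + 1) + (2 * int n - 2 - int (depth 1 t)) * f (depth 1 t)"
      using sum_list_grafts_depth[of 1 t "Suc n" f] distinct_grafts[of "Suc n" t]
        leaf_count_trees[OF t] assms
      by (simp add: sum_list_distinct_conv_sum_set)
  qed
  finally show ?thesis .
qed

definition depth_moment :: "nat \<Rightarrow> nat \<Rightarrow> int" where
  "depth_moment p n = (\<Sum>t\<in>trees n. int (depth 1 t) ^ p)"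

lemma depth_moment_Suc:
  assumes "n \<ge> 1"
  shows "depth_moment p (Suc n) =
    (\<Sum>t\<in>trees n. (int (depth 1 t) + 1) ^ Suc p
                  + (2 * int n - 2 - int (depth 1 t)) * int (depth 1 t) ^ p)"
  using sum_trees_Suc[OF assms, of "\<lambda>k. int k ^ p"]
  by (simp add: depth_moment_def add.commute)

lemma depth_moment_0_Suc:
  assumes "n \<ge> 1"
  shows "depth_moment 0 (Suc n) = (2 * int n - 1) * depth_moment 0 n"
proof -
  have "depth_moment 0 (Suc n) = (\<Sum>t\<in>trees n. 2 * int n - 1)"
    by (simp add: depth_moment_Suc[OF assms])
  then show ?thesis by (simp add: depth_moment_def mult.commute)
qed

lemma depth_moment_1_Suc:
  assumes "n \<ge> 1"
  shows "depth_moment 1 (Suc n) = 2 * int n * depth_moment 1 n + depth_moment 0 n"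
proof -
  have "depth_moment 1 (Suc n) = (\<Sum>t\<in>trees n. 2 * int n * int (depth 1 t) + 1)"
    by (simp add: depth_moment_Suc[OF assms] algebra_simps power2_eq_square)
  then show ?thesis by (simp add: depth_moment_def sum.distrib sum_distrib_left)
qed

lemma depth_moment_2_Suc:
  assumes "n \<ge> 1"
  shows "depth_moment 2 (Suc n) =
    (2 * int n + 1) * depth_moment 2 n + 3 * depth_moment 1 n + depth_moment 0 n"
proof -
  have "depth_moment 2 (Suc n) =
      (\<Sum>t\<in>trees n. (2 * int n + 1) * int (depth 1 t) ^ 2 + 3 * int (depth 1 t) + 1)"
    by (simp add: depth_moment_Suc[OF assms] algebra_simps power2_eq_square power3_eq_cube)
  then show ?thesis by (simp add: depth_moment_def sum.distrib sum_distrib_left)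
qed

lemma dfact_Suc_Suc: "int (dfact (m + 2)) = (int m + 2) * int (dfact m)"
  by (simp add: numeral_2_eq_2 algebra_simps)

lemma depth_moments_closed_form:
  "depth_moment 0 (m + 2) = int (dfact (2 * m + 1)) \<and>
   depth_moment 1 (m + 2) = int (dfact (2 * m + 2)) - int (dfact (2 * m + 1)) \<and>
   depth_moment 2 (m + 2) = (4 * int m + 7) * int (dfact (2 * m + 1)) - 3 * int (dfact (2 * m + 2))"
proof (induction m)
  case 0
  have "depth_moment p 1 = (if p = 0 then 1 else 0)" for p
    by (simp add: depth_moment_def trees_1 del: One_nat_def)
  then show ?case
    using depth_moment_0_Suc[of 1] depth_moment_1_Suc[of 1] depth_moment_2_Suc[of 1]
    by (simp add: numeral_2_eq_2 numeral_eq_Suc)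
next
  case (Suc m)
  have "Suc m + 2 = Suc (m + 2)" "2 * Suc m + 1 = (2 * m + 1) + 2" "2 * Suc m + 2 = (2 * m + 2) + 2"
    by simp_all
  then show ?case
    using Suc.IH depth_moment_0_Suc[of "m + 2"] depth_moment_1_Suc[of "m + 2"]
      depth_moment_2_Suc[of "m + 2"] dfact_Suc_Suc[of "2 * m + 1"] dfact_Suc_Suc[of "2 * m + 2"]
    by (simp only:) (simp add: algebra_simps)
qed

lemma depth_range:
  assumes "n \<ge> 2" "t \<in> trees n"
  shows "depth 1 t \<in> {1..n-1}"
proof -
  have "1 \<in> leaves t" using assms by (auto simp: trees_def)
  then have "depth 1 t < n" using depth_less_leaf_count leaf_count_trees[OF assms(2)] by blast
  moreover have "t \<noteq> Leaf j" for j using leaf_count_trees[OF assms(2)] assms(1) by auto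
  then have "depth 1 t \<ge> 1" by (cases t) auto
  ultimately show ?thesis by auto
qed

lemma sum_d_eq_depth_moment:
  assumes "n \<ge> 2"
  shows "(\<Sum>k=1..n-1. int (k ^ p * d k n)) = depth_moment p n"
proof -
  have "(\<Sum>k=1..n-1. int (k ^ p * d k n))
      = (\<Sum>k=1..n-1. \<Sum>t\<in>{t \<in> trees n. depth 1 t = k}. int (depth 1 t) ^ p)"
    by (simp add: d_def mult.commute)
  also have "\<dots> = depth_moment p n"
    unfolding depth_moment_def
    by (rule sum.group) (use finite_trees depth_range[OF assms] assms in auto)
  finally show ?thesis .
qed

theorem lemma11:
  fixes n :: nat
  assumes "n \<ge> 2"
  shows "(\<Sum>k=1..n-1. int (k^2 * d k n))
         = int (4*n - 1) * int (dfact (2*n - 3)) - 3 * int (dfact (2*n - 2))"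
proof -
  obtain m where m: "n = m + 2" using assms by (metis add.commute le_Suc_ex)
  have "2*n - 3 = 2*m + 1" "2*n - 2 = 2*m + 2" "int (4*n - 1) = 4 * int m + 7" using m by auto
  then show ?thesis
    using sum_d_eq_depth_moment[OF assms, of 2] depth_moments_closed_form[of m] m by simp
qed

end
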